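(* Let $D\subset\mathbb{R}^2$ be a domain and $v\colon D\to\mathbb{R}^2$ a diffeomorphism onto its image. Let $s,\mu,\theta\colon[0,\infty)\to\mathbb{R}$ be $C^2$ functions satisfying $$\cosh^2(s(t))\,\mu'(t)-\sinh^2(s(t))\,\theta'(t)=\text{constant},$$ and let $A(t)=\psi(s(t),\mu(t),\theta(t))$, where $$\psi(s,\mu,\theta)=\cosh(s)\begin{pmatrix}\cos\mu&-\sin\mu\\ \sin\mu&\cos\mu\end{pmatrix}+\sinh(s)\begin{pmatrix}\cos\theta&\sin\theta\\ \sin\theta&-\cos\theta\end{pmatrix}.$$ Then $\varphi(t,\alpha)=A(t)v(\alpha)$ is a solution of the Lagrangian incompressible Euler problem on $D$.
   Context: Primes denote derivatives with respect to $t$. Note $\psi$ takes values in $\mathbb{SL}(2)$ (real $2\times2$ matrices of determinant $1$). For $\varphi(t,\alpha)=\varphi^t(\alpha)$, $d\varphi^t$ is the Jacobian in $\alpha$. "Solution of the Lagrangian incompressible Euler problem on $D$" means: each $\varphi^t$ is a diffeomorphism of $D$ onto its image, $\det(d\varphi^t)=\det(d\varphi^0)\ne0$ for all $t\ge0$, and there is a scalar function $p(t,\alpha)$ with $(d\varphi^t)^T\varphi''+\nabla_\alpha p=0$. *)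

theory Defs
  imports "HOL-Analysis.Analysis"
begin

definition domain2 :: "(real^2) set \<Rightarrow> bool" where
  "domain2 D \<longleftrightarrow> open D \<and> connected D \<and> D \<noteq> {}"

definition C1_on :: "(real^2) set \<Rightarrow> (real^2 \<Rightarrow> real^2) \<Rightarrow> bool" where
  "C1_on S f \<longleftrightarrow> (\<exists>f'. (\<forall>x\<in>S. (f has_derivative f' x) (at x))
                         \<and> continuous_on S (\<lambda>x. matrix (f' x)))"

definition diffeo_onto_image :: "(real^2 \<Rightarrow> real^2) \<Rightarrow> (real^2) set \<Rightarrow> bool" where
  "diffeo_onto_image f D \<longleftrightarrow> inj_on f D \<and> open (f ` D) \<and> C1_on D f \<and>
     (\<exists>g. (\<forall>x\<in>D. g (f x) = x) \<and> C1_on (f ` D) g)"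

definition C2_nonneg :: "(real \<Rightarrow> real) \<Rightarrow> bool" where
  "C2_nonneg f \<longleftrightarrow> (\<exists>f1 f2. (\<forall>t\<ge>0. (f has_real_derivative f1 t) (at t within {0..}) \<and>
                                   (f1 has_real_derivative f2 t) (at t within {0..}))
                           \<and> continuous_on {0..} f2)"

definition rot2 :: "real \<Rightarrow> real^2^2" where
  "rot2 m = vector [vector [cos m, - sin m], vector [sin m, cos m]]"

definition refl2 :: "real \<Rightarrow> real^2^2" where
  "refl2 th = vector [vector [cos th, sin th], vector [sin th, - cos th]]"

definition psi :: "real \<Rightarrow> real \<Rightarrow> real \<Rightarrow> real^2^2" where
  "psi s m th = cosh s *\<^sub>R rot2 m + sinh s *\<^sub>R refl2 th"

definition lagrangian_euler_solution :: "(real^2) set \<Rightarrow> (real \<Rightarrow> real^2 \<Rightarrow> real^2) \<Rightarrow> bool" where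
  "lagrangian_euler_solution D phi \<longleftrightarrow>
     (\<forall>t\<ge>0. diffeo_onto_image (phi t) D) \<and>
     (\<exists>J vel acc (p :: real \<Rightarrow> real^2 \<Rightarrow> real) g.
        (\<forall>t\<ge>0. \<forall>a\<in>D.
           (phi t has_derivative (\<lambda>h. J t a *v h)) (at a) \<and>
           det (J t a) = det (J 0 a) \<and> det (J 0 a) \<noteq> 0 \<and>
           ((\<lambda>\<tau>. phi \<tau> a) has_vector_derivative vel t a) (at t within {0..}) \<and>
           ((\<lambda>\<tau>. vel \<tau> a) has_vector_derivative acc t a) (at t within {0..}) \<and>
           (p t has_derivative (\<lambda>h. g t a \<bullet> h)) (at a) \<and>
           transpose (J t a) *v acc t a + g t a = 0))"

end

theory Submission
  imports Defs
begin

text \<open>For \<open>\<phi>(t, \<alpha>) = A(t) v(\<alpha>)\<close> the Jacobian is \<open>A(t) dv(\<alpha>)\<close>, so the flow is incompressible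
  as soon as \<open>det A\<close> is constant, and \<open>(d\<phi>)\<^sup>T \<phi>'' = (dv)\<^sup>T A\<^sup>T A'' v\<close> is the gradient of
  \<open>(1/2) v \<bullet> A\<^sup>T A'' v\<close> whenever \<open>A\<^sup>T A''\<close> is symmetric. Since \<open>A'\<^sup>T A'\<close> is symmetric, the
  skew part of \<open>A\<^sup>T A''\<close> is the derivative of the skew part of \<open>A\<^sup>T A'\<close>. For \<open>A = \<psi>(s, \<mu>, \<theta>)\<close>
  one has \<open>det A = cosh\<^sup>2 s - sinh\<^sup>2 s = 1\<close>, and the skew part of \<open>A\<^sup>T A'\<close> is
  \<open>2 (cosh\<^sup>2 s \<mu>' - sinh\<^sup>2 s \<theta>')\<close> times a quarter turn, constant by hypothesis.\<close>

lemma bounded_bilinear_matrix_matrix_mult: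
  "bounded_bilinear ((\<lambda>A B. A ** B) :: real^'n^'m \<Rightarrow> real^'k^'n \<Rightarrow> real^'k^'m)"
  unfolding bilinear_conv_bounded_bilinear[symmetric] bilinear_def
  by (auto intro!: linearI simp: matrix_add_ldistrib matrix_scalar_ac scalar_matrix_assoc[symmetric]
        matrix_matrix_mult_def vec_eq_iff sum.distrib sum_distrib_left algebra_simps)

lemma bounded_linear_transpose: "bounded_linear (transpose :: real^'n^'m \<Rightarrow> real^'m^'n)"
  by (rule linear_conv_bounded_linear[THEN iffD1]) (auto intro!: linearI simp: transpose_def vec_eq_iff)

lemma bounded_linear_matrix_vector_mult_left: "bounded_linear (\<lambda>A :: real^'n^'m. A *v x)"
  by (rule linear_conv_bounded_linear[THEN iffD1])
     (auto intro!: linearI simp: matrix_vector_mult_def vec_eq_iff sum.distrib sum_distrib_left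
        algebra_simps)

lemma has_vector_derivative_matrix_entrywise:
  fixes A :: "real \<Rightarrow> real^'n^'m"
  assumes "\<And>i j. ((\<lambda>\<tau>. A \<tau> $ i $ j) has_real_derivative A' $ i $ j) (at t within S)"
  shows "(A has_vector_derivative A') (at t within S)"
  unfolding has_vector_derivative_def
  by (subst has_derivative_componentwise_within)
    (use assms in \<open>auto simp: Basis_vec_def inner_axis has_real_derivative_iff_has_vector_derivative
      has_vector_derivative_def\<close>)

lemma transpose_mult_second_derivative_symmetric:
  fixes A A1 :: "real \<Rightarrow> real^'n^'n"
  assumes nontrivial: "at t within S \<noteq> bot"
    and A: "(A has_vector_derivative A1 t) (at t within S)"
    and A1: "(A1 has_vector_derivative A2) (at t within S)"
    and skew: "((\<lambda>\<tau>. transpose (A \<tau>) ** A1 \<tau> - transpose (transpose (A \<tau>) ** A1 \<tau>))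
                 has_vector_derivative 0) (at t within S)"
  shows "transpose (transpose (A t) ** A2) = transpose (A t) ** A2"
proof -
  have AT: "((\<lambda>\<tau>. transpose (A \<tau>)) has_vector_derivative transpose (A1 t)) (at t within S)"
    by (rule bounded_linear.has_vector_derivative[OF bounded_linear_transpose A])
  have W: "((\<lambda>\<tau>. transpose (A \<tau>) ** A1 \<tau>) has_vector_derivative
             transpose (A t) ** A2 + transpose (A1 t) ** A1 t) (at t within S)"
    by (rule bounded_bilinear.has_vector_derivative[OF bounded_bilinear_matrix_matrix_mult AT A1])
  have WT: "((\<lambda>\<tau>. transpose (transpose (A \<tau>) ** A1 \<tau>)) has_vector_derivative
             transpose (transpose (A t) ** A2 + transpose (A1 t) ** A1 t)) (at t within S)"
    by (rule bounded_linear.has_vector_derivative[OF bounded_linear_transpose W])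
  have "transpose (A t) ** A2 + transpose (A1 t) ** A1 t
          - transpose (transpose (A t) ** A2 + transpose (A1 t) ** A1 t) = 0"
    using vector_derivative_unique_within[OF nontrivial has_vector_derivative_diff[OF W WT] skew] .
  then show ?thesis
    by (simp add: matrix_transpose_mul linear_add[OF bounded_linear.linear[OF bounded_linear_transpose]])
qed

lemma C1_on_matrix_vector_mult_left:
  assumes "C1_on S f"
  shows "C1_on S (\<lambda>x. B *v f x)"
proof -
  obtain f' where f': "\<And>x. x \<in> S \<Longrightarrow> (f has_derivative f' x) (at x)"
    and cont: "continuous_on S (\<lambda>x. matrix (f' x))"
    using assms unfolding C1_on_def by blast
  have "matrix (\<lambda>h. B *v f' x h) = B ** matrix (f' x)" if "x \<in> S" for x
    using matrix_compose[OF has_derivative_linear[OF f'[OF that]] matrix_vector_mul_linear]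
    by (simp add: o_def)
  moreover have "continuous_on S (\<lambda>x. B ** matrix (f' x))"
    by (intro bounded_bilinear.continuous_on[OF bounded_bilinear_matrix_matrix_mult]
        continuous_on_const cont)
  ultimately show ?thesis
    unfolding C1_on_def
    by (intro exI[of _ "\<lambda>x h. B *v f' x h"] conjI ballI
        bounded_linear.has_derivative[OF matrix_vector_mul_bounded_linear f'])
      (auto cong: continuous_on_cong)
qed

lemma C1_on_compose_matrix_vector_mult:
  assumes "C1_on S g" and "(\<lambda>y. C *v y) ` T \<subseteq> S"
  shows "C1_on T (\<lambda>y. g (C *v y))"
proof -
  obtain g' where g': "\<And>x. x \<in> S \<Longrightarrow> (g has_derivative g' x) (at x)"
    and cont: "continuous_on S (\<lambda>x. matrix (g' x))"
    using assms(1) unfolding C1_on_def by blast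
  have CT: "C *v y \<in> S" if "y \<in> T" for y
    using assms(2) that by blast
  have "((\<lambda>y. g (C *v y)) has_derivative (\<lambda>h. g' (C *v y) (C *v h))) (at y)" if "y \<in> T" for y
    using diff_chain_at[OF bounded_linear_imp_has_derivative[OF matrix_vector_mul_bounded_linear]
        g'[OF CT[OF that]]]
    by (simp add: o_def)
  moreover have "matrix (\<lambda>h. g' (C *v y) (C *v h)) = matrix (g' (C *v y)) ** C" if "y \<in> T" for y
    using matrix_compose[OF matrix_vector_mul_linear has_derivative_linear[OF g'[OF CT[OF that]]]]
    by (simp add: o_def)
  moreover have "continuous_on T (\<lambda>y. matrix (g' (C *v y)) ** C)"
    by (intro bounded_bilinear.continuous_on[OF bounded_bilinear_matrix_matrix_mult] continuous_on_const
        continuous_on_compose2[OF cont] linear_continuous_on matrix_vector_mul_bounded_linear assms(2))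
  ultimately show ?thesis
    unfolding C1_on_def
    by (intro exI[of _ "\<lambda>y h. g' (C *v y) (C *v h)"] conjI ballI) (auto cong: continuous_on_cong)
qed

lemma diffeo_onto_image_matrix_vector_mult:
  assumes v: "diffeo_onto_image v D" and B: "invertible B"
  shows "diffeo_onto_image (\<lambda>a. B *v v a) D"
proof -
  obtain C where BC: "B ** C = mat 1" and CB: "C ** B = mat 1"
    using B unfolding invertible_def by blast
  have CB_apply: "C *v (B *v x) = x" and BC_apply: "B *v (C *v x) = x" for x
    by (simp_all add: matrix_vector_mul_assoc BC CB)
  obtain g where gv: "\<forall>x\<in>D. g (v x) = x" and g: "C1_on (v ` D) g"
    using v unfolding diffeo_onto_image_def by blast
  have image: "(\<lambda>a. B *v v a) ` D = (\<lambda>y. B *v y) ` v ` D"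
    by auto
  have "surj (\<lambda>y. B *v y)"
    by (metis BC_apply surjI)
  then have "open ((\<lambda>a. B *v v a) ` D)"
    unfolding image using v unfolding diffeo_onto_image_def
    by (intro open_surjective_linear_image[OF _ matrix_vector_mul_linear]) auto
  moreover have "inj_on (\<lambda>a. B *v v a) D"
    using v unfolding diffeo_onto_image_def inj_on_def by (metis CB_apply)
  moreover have "C1_on D (\<lambda>a. B *v v a)"
    using v unfolding diffeo_onto_image_def by (blast intro: C1_on_matrix_vector_mult_left)
  moreover have "C1_on ((\<lambda>a. B *v v a) ` D) (\<lambda>y. g (C *v y))"
    by (rule C1_on_compose_matrix_vector_mult[OF g]) (auto simp: CB_apply)
  moreover have "\<forall>x\<in>D. g (C *v (B *v v x)) = x"
    using gv by (simp add: CB_apply)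
  ultimately show ?thesis
    unfolding diffeo_onto_image_def by (blast intro: exI[of _ "\<lambda>y. g (C *v y)"])
qed

lemma diffeo_onto_image_derivative_det_nonzero:
  assumes v: "diffeo_onto_image v D" and D: "open D" and x: "x \<in> D"
    and v': "(v has_derivative v') (at x)"
  shows "det (matrix v') \<noteq> 0"
proof -
  obtain g g' where gv: "\<And>x. x \<in> D \<Longrightarrow> g (v x) = x"
    and g': "\<And>y. y \<in> v ` D \<Longrightarrow> (g has_derivative g' y) (at y)"
    using v unfolding diffeo_onto_image_def C1_on_def by blast
  have "(g \<circ> v has_derivative g' (v x) \<circ> v') (at x)"
    using diff_chain_at[OF v' g'] x by blast
  moreover have "(g \<circ> v has_derivative (\<lambda>h. h)) (at x)"
    by (rule has_derivative_transform_within_open[OF has_derivative_ident D x]) (simp add: gv)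
  ultimately have "g' (v x) \<circ> v' = (\<lambda>h. h)"
    by (rule has_derivative_unique)
  then have "matrix (g' (v x)) ** matrix v' = mat 1"
    using matrix_compose[OF has_derivative_linear[OF v'] has_derivative_linear[OF g'[of "v x"]]] x
    by (simp add: matrix_id_mat_1[unfolded id_def])
  then show ?thesis
    using invertible_det_nz invertible_left_inverse by blast
qed

lemma has_derivative_quadratic_form:
  fixes M :: "real^'m^'m" and v :: "real^'n \<Rightarrow> real^'m"
  assumes M: "transpose M = M" and v: "(v has_derivative v') (at a)"
  shows "((\<lambda>b. v b \<bullet> (M *v v b)) has_derivative
           (\<lambda>h. (2 *\<^sub>R (transpose (matrix v') *v (M *v v a))) \<bullet> h)) (at a)"
proof -
  have "((\<lambda>b. v b \<bullet> (M *v v b)) has_derivative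
          (\<lambda>h. v a \<bullet> (M *v v' h) + v' h \<bullet> (M *v v a))) (at a)"
    by (rule has_derivative_inner[OF v
          bounded_linear.has_derivative[OF matrix_vector_mul_bounded_linear v]])
  moreover have "v a \<bullet> (M *v v' h) + v' h \<bullet> (M *v v a)
      = (2 *\<^sub>R (transpose (matrix v') *v (M *v v a))) \<bullet> h" for h
  proof -
    have "v' h = matrix v' *v h"
      using has_derivative_linear[OF v] by (simp add: matrix_works)
    moreover have "v a v* M = M *v v a"
      by (metis M vector_transpose_matrix)
    ultimately show ?thesis
      using M dot_lmul_matrix[of "v a" M "v' h"] dot_lmul_matrix[of "M *v v a" "matrix v'" h]
      by (simp add: inner_commute)
  qed
  ultimately show ?thesis
    by simp
qed

lemma lagrangian_euler_solution_matrix_curve: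
  fixes A A1 A2 :: "real \<Rightarrow> real^2^2"
  assumes D: "open D" and v: "diffeo_onto_image v D"
    and det: "\<And>t. t \<ge> 0 \<Longrightarrow> det (A t) = det (A 0)" and det0: "det (A 0) \<noteq> 0"
    and A: "\<And>t. t \<ge> 0 \<Longrightarrow> (A has_vector_derivative A1 t) (at t within {0..})"
    and A1: "\<And>t. t \<ge> 0 \<Longrightarrow> (A1 has_vector_derivative A2 t) (at t within {0..})"
    and sym: "\<And>t. t \<ge> 0 \<Longrightarrow> transpose (transpose (A t) ** A2 t) = transpose (A t) ** A2 t"
  shows "lagrangian_euler_solution D (\<lambda>t a. A t *v v a)"
proof -
  obtain v' where v': "\<And>a. a \<in> D \<Longrightarrow> (v has_derivative v' a) (at a)"
    using v unfolding diffeo_onto_image_def C1_on_def by blast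
  define M where "M t = transpose (A t) ** A2 t" for t
  define J where "J t a = A t ** matrix (v' a)" for t a
  define p where "p t a = - (1 / 2) * (v a \<bullet> (M t *v v a))" for t a
  define g where "g t a = - (transpose (matrix (v' a)) *v (M t *v v a))" for t a
  have diffeo: "diffeo_onto_image (\<lambda>a. A t *v v a) D" if "t \<ge> 0" for t
    using diffeo_onto_image_matrix_vector_mult[OF v] det[OF that] det0 invertible_det_nz by metis
  show ?thesis
    unfolding lagrangian_euler_solution_def
  proof (rule conjI, use diffeo in blast, rule exI[of _ J], rule exI[of _ "\<lambda>t a. A1 t *v v a"],
      rule exI[of _ "\<lambda>t a. A2 t *v v a"], rule exI[of _ p], rule exI[of _ g], intro allI impI ballI conjI)
    fix t a
    assume t: "(t::real) \<ge> 0" and a: "a \<in> D"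
    show "((\<lambda>a. A t *v v a) has_derivative (\<lambda>h. J t a *v h)) (at a)"
      using bounded_linear.has_derivative[OF matrix_vector_mul_bounded_linear v'[OF a]]
        has_derivative_linear[OF v'[OF a]]
      by (simp add: J_def matrix_works flip: matrix_vector_mul_assoc)
    show "det (J t a) = det (J 0 a)"
      using det[OF t] by (simp add: J_def det_mul)
    show "det (J 0 a) \<noteq> 0"
      using det0 diffeo_onto_image_derivative_det_nonzero[OF v D a v'[OF a]]
      by (simp add: J_def det_mul)
    show "((\<lambda>\<tau>. A \<tau> *v v a) has_vector_derivative A1 t *v v a) (at t within {0..})"
      by (rule bounded_linear.has_vector_derivative[OF bounded_linear_matrix_vector_mult_left A[OF t]])
    show "((\<lambda>\<tau>. A1 \<tau> *v v a) has_vector_derivative A2 t *v v a) (at t within {0..})"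
      by (rule bounded_linear.has_vector_derivative[OF bounded_linear_matrix_vector_mult_left A1[OF t]])
    show "(p t has_derivative (\<lambda>h. g t a \<bullet> h)) (at a)"
      using has_derivative_mult_right[of _ _ _ "- (1 / 2)",
          OF has_derivative_quadratic_form[OF sym[OF t, folded M_def] v'[OF a]]]
      by (simp add: p_def[abs_def] g_def)
    show "transpose (J t a) *v (A2 t *v v a) + g t a = 0"
      by (simp add: J_def g_def M_def matrix_transpose_mul matrix_vector_mul_assoc matrix_mul_assoc)
  qed
qed

lemma has_vector_derivative_rot2:
  assumes "(f has_real_derivative f') (at t within S)"
  shows "((\<lambda>\<tau>. rot2 (f \<tau>)) has_vector_derivative f' *\<^sub>R rot2 (f t + pi / 2)) (at t within S)"
proof (rule has_vector_derivative_matrix_entrywise)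
  fix i j :: 2
  show "((\<lambda>\<tau>. rot2 (f \<tau>) $ i $ j) has_real_derivative (f' *\<^sub>R rot2 (f t + pi / 2)) $ i $ j)
          (at t within S)"
    using exhaust_2[of i] exhaust_2[of j] assms
    by (auto simp: rot2_def cos_add sin_add intro!: derivative_eq_intros)
qed

lemma has_vector_derivative_refl2:
  assumes "(f has_real_derivative f') (at t within S)"
  shows "((\<lambda>\<tau>. refl2 (f \<tau>)) has_vector_derivative f' *\<^sub>R refl2 (f t + pi / 2)) (at t within S)"
proof (rule has_vector_derivative_matrix_entrywise)
  fix i j :: 2
  show "((\<lambda>\<tau>. refl2 (f \<tau>) $ i $ j) has_real_derivative (f' *\<^sub>R refl2 (f t + pi / 2)) $ i $ j)
          (at t within S)"
    using exhaust_2[of i] exhaust_2[of j] assms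
    by (auto simp: refl2_def cos_add sin_add intro!: derivative_eq_intros)
qed

text \<open>The derivative of \<open>psi\<close> along a curve with velocity \<open>(s', m', th')\<close>, using
  \<open>d/dm rot2 m = rot2 (m + pi/2)\<close> and \<open>d/dth refl2 th = refl2 (th + pi/2)\<close>.\<close>
definition psi_dot :: "real \<Rightarrow> real \<Rightarrow> real \<Rightarrow> real \<Rightarrow> real \<Rightarrow> real \<Rightarrow> real^2^2" where
  "psi_dot s m th s' m' th' =
     s' *\<^sub>R (sinh s *\<^sub>R rot2 m + cosh s *\<^sub>R refl2 th)
     + (cosh s * m') *\<^sub>R rot2 (m + pi / 2) + (sinh s * th') *\<^sub>R refl2 (th + pi / 2)"

lemma has_vector_derivative_psi:
  assumes "(s has_real_derivative s') (at t within S)"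
    and "(m has_real_derivative m') (at t within S)"
    and "(th has_real_derivative th') (at t within S)"
  shows "((\<lambda>\<tau>. psi (s \<tau>) (m \<tau>) (th \<tau>)) has_vector_derivative
           psi_dot (s t) (m t) (th t) s' m' th') (at t within S)"
  unfolding psi_def psi_dot_def
  by (auto intro!: derivative_eq_intros has_vector_derivative_rot2 has_vector_derivative_refl2 assms
      simp: algebra_simps)

lemma det_psi: "det (psi s m th) = 1"
proof -
  have "det (psi s m th) = (cosh s)\<^sup>2 - (sinh s)\<^sup>2"
    by (simp add: det_2 psi_def rot2_def refl2_def)
      (use sin_cos_squared_add[of m] sin_cos_squared_add[of th] in algebra)
  then show ?thesis
    by (simp add: cosh_square_eq)
qed

lemma psi_transpose_mult_psi_dot_skew:
  "transpose (psi s m th) ** psi_dot s m th s' m' th'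
     - transpose (transpose (psi s m th) ** psi_dot s m th s' m' th')
   = (2 * ((cosh s)\<^sup>2 * m' - (sinh s)\<^sup>2 * th')) *\<^sub>R rot2 (pi / 2)"
  by (simp add: vec_eq_iff forall_2 matrix_matrix_mult_def sum_2 transpose_def
      psi_def psi_dot_def rot2_def refl2_def cos_add sin_add)
    (use sin_cos_squared_add[of m] sin_cos_squared_add[of th] in algebra)

lemma psi_dot_differentiable:
  assumes "(s has_real_derivative s') (at t within S)"
    and "(m has_real_derivative m') (at t within S)"
    and "(th has_real_derivative th') (at t within S)"
    and "(s1 has_real_derivative s1') (at t within S)"
    and "(m1 has_real_derivative m1') (at t within S)"
    and "(th1 has_real_derivative th1') (at t within S)"
  shows "(\<lambda>\<tau>. psi_dot (s \<tau>) (m \<tau>) (th \<tau>) (s1 \<tau>) (m1 \<tau>) (th1 \<tau>))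
           differentiable (at t within S)"
  unfolding psi_dot_def
  by (rule differentiableI_vector, (rule derivative_eq_intros has_vector_derivative_rot2
       has_vector_derivative_refl2 assms refl)+)

lemma at_within_atLeast_nontrivial: "a \<le> t \<Longrightarrow> at t within {a..} \<noteq> bot" for a t :: real
proof
  assume "a \<le> t" "at t within {a..} = bot"
  moreover have "at_right t \<le> at t within {a..}"
    using \<open>a \<le> t\<close> by (intro at_le) auto
  ultimately show False
    using trivial_limit_at_right_real[of t] by (simp add: bot_unique)
qed

lemma C2_nonneg_derivative_differentiable:
  assumes "C2_nonneg f"
    and f': "\<And>t. t \<ge> 0 \<Longrightarrow> (f has_real_derivative f' t) (at t within {0..})"
  shows "\<exists>f''. \<forall>t\<ge>0. (f' has_real_derivative f'' t) (at t within {0..})"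
proof -
  obtain f1 f2 where f1: "\<And>t. t \<ge> 0 \<Longrightarrow> (f has_real_derivative f1 t) (at t within {0..})"
    and f2: "\<And>t. t \<ge> 0 \<Longrightarrow> (f1 has_real_derivative f2 t) (at t within {0..})"
    using assms(1) unfolding C2_nonneg_def by blast
  have f'_eq: "f' t = f1 t" if "t \<ge> 0" for t
    using f'[OF that] f1[OF that] at_within_atLeast_nontrivial[OF that]
    by (rule has_field_derivative_unique)
  have "(f' has_real_derivative f2 t) (at t within {0..})" if "t \<ge> 0" for t
    using f2[OF that] unfolding has_real_derivative_iff_has_vector_derivative
    by (rule has_vector_derivative_transform[rotated 2]) (use that f'_eq in auto)
  then show ?thesis
    by blast
qed

lemma psi_curve_transpose_mult_second_derivative_symmetric:
  fixes s \<mu> \<theta> \<mu>' \<theta>' :: "real \<Rightarrow> real"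
  defines "A \<equiv> \<lambda>t. psi (s t) (\<mu> t) (\<theta> t)"
  assumes "C2_nonneg s" and "C2_nonneg \<mu>" and "C2_nonneg \<theta>"
    and \<mu>': "\<And>t. t \<ge> 0 \<Longrightarrow> (\<mu> has_real_derivative \<mu>' t) (at t within {0..})"
    and \<theta>': "\<And>t. t \<ge> 0 \<Longrightarrow> (\<theta> has_real_derivative \<theta>' t) (at t within {0..})"
    and const: "\<And>t. t \<ge> 0 \<Longrightarrow> (cosh (s t))\<^sup>2 * \<mu>' t - (sinh (s t))\<^sup>2 * \<theta>' t = c"
  shows "\<exists>A1 A2. \<forall>t\<ge>0. (A has_vector_derivative A1 t) (at t within {0..}) \<and>
                        (A1 has_vector_derivative A2 t) (at t within {0..}) \<and>
                        transpose (transpose (A t) ** A2 t) = transpose (A t) ** A2 t"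
proof -
  obtain s' s'' where s': "\<And>t. t \<ge> 0 \<Longrightarrow> (s has_real_derivative s' t) (at t within {0..})"
    and s'': "\<And>t. t \<ge> 0 \<Longrightarrow> (s' has_real_derivative s'' t) (at t within {0..})"
    using \<open>C2_nonneg s\<close> unfolding C2_nonneg_def by blast
  obtain \<mu>'' where \<mu>'': "\<And>t. t \<ge> 0 \<Longrightarrow> (\<mu>' has_real_derivative \<mu>'' t) (at t within {0..})"
    using C2_nonneg_derivative_differentiable[OF \<open>C2_nonneg \<mu>\<close> \<mu>'] by blast
  obtain \<theta>'' where \<theta>'': "\<And>t. t \<ge> 0 \<Longrightarrow> (\<theta>' has_real_derivative \<theta>'' t) (at t within {0..})"
    using C2_nonneg_derivative_differentiable[OF \<open>C2_nonneg \<theta>\<close> \<theta>'] by blast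
  define A1 where "A1 t = psi_dot (s t) (\<mu> t) (\<theta> t) (s' t) (\<mu>' t) (\<theta>' t)" for t
  define A2 where "A2 t = vector_derivative A1 (at t within {0..})" for t
  have "(A has_vector_derivative A1 t) (at t within {0..}) \<and>
        (A1 has_vector_derivative A2 t) (at t within {0..}) \<and>
        transpose (transpose (A t) ** A2 t) = transpose (A t) ** A2 t" if t: "t \<ge> 0" for t
  proof (intro conjI)
    show A: "(A has_vector_derivative A1 t) (at t within {0..})"
      unfolding A_def A1_def by (rule has_vector_derivative_psi[OF s' \<mu>' \<theta>'] t)+
    show A1: "(A1 has_vector_derivative A2 t) (at t within {0..})"
      unfolding A2_def A1_def vector_derivative_works[symmetric]
      by (rule psi_dot_differentiable[OF s' \<mu>' \<theta>' s'' \<mu>'' \<theta>''] t)+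
    have "((\<lambda>\<tau>. transpose (A \<tau>) ** A1 \<tau> - transpose (transpose (A \<tau>) ** A1 \<tau>))
            has_vector_derivative 0) (at t within {0..})"
      by (rule has_vector_derivative_transform[where f = "\<lambda>_. (2 * c) *\<^sub>R rot2 (pi / 2)"])
        (use t const in \<open>auto simp: A_def A1_def psi_transpose_mult_psi_dot_skew\<close>)
    then show "transpose (transpose (A t) ** A2 t) = transpose (A t) ** A2 t"
      by (rule transpose_mult_second_derivative_symmetric[OF at_within_atLeast_nontrivial[OF t] A A1])
  qed
  then show ?thesis
    by blast
qed

theorem theorem4p2:
  fixes D :: "(real^2) set" and v :: "real^2 \<Rightarrow> real^2"
    and s \<mu> \<theta> \<mu>' \<theta>' :: "real \<Rightarrow> real"
  assumes "domain2 D"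
    and "diffeo_onto_image v D"
    and "C2_nonneg s" and "C2_nonneg \<mu>" and "C2_nonneg \<theta>"
    and "\<And>t. t \<ge> 0 \<Longrightarrow> (\<mu> has_real_derivative \<mu>' t) (at t within {0..})"
    and "\<And>t. t \<ge> 0 \<Longrightarrow> (\<theta> has_real_derivative \<theta>' t) (at t within {0..})"
    and "\<exists>c. \<forall>t\<ge>0. (cosh (s t))\<^sup>2 * \<mu>' t - (sinh (s t))\<^sup>2 * \<theta>' t = c"
  shows "lagrangian_euler_solution D (\<lambda>t a. psi (s t) (\<mu> t) (\<theta> t) *v v a)"
proof -
  obtain c where "\<And>t. t \<ge> 0 \<Longrightarrow> (cosh (s t))\<^sup>2 * \<mu>' t - (sinh (s t))\<^sup>2 * \<theta>' t = c"
    using assms(8) by blast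
  then obtain A1 A2 where curve: "\<forall>t\<ge>0.
      ((\<lambda>t. psi (s t) (\<mu> t) (\<theta> t)) has_vector_derivative A1 t) (at t within {0..}) \<and>
      (A1 has_vector_derivative A2 t) (at t within {0..}) \<and>
      transpose (transpose (psi (s t) (\<mu> t) (\<theta> t)) ** A2 t)
        = transpose (psi (s t) (\<mu> t) (\<theta> t)) ** A2 t"
    using psi_curve_transpose_mult_second_derivative_symmetric[OF assms(3-7)] by blast
  have "open D"
    using assms(1) by (simp add: domain2_def)
  then show ?thesis
    by (rule lagrangian_euler_solution_matrix_curve[where A = "\<lambda>t. psi (s t) (\<mu> t) (\<theta> t)",
          OF _ assms(2)])
      (use curve in \<open>auto simp: det_psi\<close>)
qed

end
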